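(* Let $a:\mathbb{R}\to\mathbb{R}$ be Lipschitz continuous and let $k(x,y):=\frac1y\exp\big(i\frac{a(x)-a(x-y)}{y}\big)$ for $x\in\mathbb{R}$, $y\in\mathbb{R}\setminus\{0\}$. Then for all $x_0\in\mathbb{R}$ and $y\in\mathbb{R}\setminus\{0\}$, \[ \int_{\{|x|>2|y|\}}|k(x+x_0,x-y)-k(x+x_0,x)|\,dx\le 8(1+\|a'\|_\infty). \]
   Context: $\|a'\|_\infty$ denotes the essential supremum of the a.e. derivative of the Lipschitz function $a$ (its Lipschitz constant). *)

theory Defs
  imports "HOL-Analysis.Analysis"
begin

definition kern :: "(real \<Rightarrow> real) \<Rightarrow> real \<Rightarrow> real \<Rightarrow> complex" where
  "kern a x y = (1 / complex_of_real y) * exp (\<i> * complex_of_real ((a x - a (x - y)) / y))"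

text \<open>The Lipschitz constant of a (which equals the sup norm of its a.e. derivative).\<close>
definition lip_const :: "(real \<Rightarrow> real) \<Rightarrow> real" where
  "lip_const a = Inf {L. L-lipschitz_on UNIV a}"

end

(* Write k(X, s) = s\<^sup>-\<^sup>1 e^(i q(s)) with the difference quotient q(s) = (a X - a (X - s)) / s.
   Since r \<mapsto> e^(i r) is 1-Lipschitz and |q(s) - q(t)| \<le> 2 L |s - t| / |t| for an L-Lipschitz a,
   |k(X, s) - k(X, t)| \<le> |s - t| / (|s| |t|) + 2 L |s - t| / t\<^sup>2.  For s = x - y, t = x and
   |x| > 2 |y| this is at most 2 (1 + L) |y| / x\<^sup>2, whose integral over |x| \<ge> 2 |y| is 2 (1 + L). *)

theory Submission
  imports Defs "HOL-Probability.Characteristic_Functions"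
begin

lemma norm_iexp_diff_le: "cmod (iexp r - iexp s) \<le> \<bar>r - s\<bar>"
proof -
  have "iexp r - iexp s = iexp s * (iexp (r - s) - 1)"
    by (simp add: algebra_simps flip: exp_add)
  then have "cmod (iexp r - iexp s) = cmod (iexp (r - s) - 1)"
    by (simp add: norm_mult)
  also have "\<dots> \<le> \<bar>r - s\<bar>"
    using iexp_approx1[of "r - s" 0] by simp
  finally show ?thesis .
qed

lemma lipschitz_on_lip_const:
  assumes "\<exists>L. L-lipschitz_on UNIV a"
  shows "(lip_const a)-lipschitz_on UNIV a"
proof -
  let ?S = "{L. L-lipschitz_on UNIV a}"
  have "?S \<noteq> {}" using assms by auto
  have quotient_le: "dist (a x) (a y) / dist x y \<le> lip_const a" for x y
    unfolding lip_const_def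
    by (rule cInf_greatest[OF \<open>?S \<noteq> {}\<close>])
       (auto simp: divide_le_eq lipschitz_on_def dist_commute)
  show ?thesis
  proof (rule lipschitz_onI)
    show "dist (a x) (a y) \<le> lip_const a * dist x y" for x y
      using quotient_le[of x y] by (cases "x = y") (simp_all add: divide_le_eq)
    have "dist (a 0) (a 1) \<le> lip_const a"
      using quotient_le[of 0 1] by simp
    then show "0 \<le> lip_const a"
      by (meson order.trans zero_le_dist)
  qed
qed

lemma abs_difference_quotient_diff_le:
  fixes a :: "real \<Rightarrow> real"
  assumes lip: "L-lipschitz_on UNIV a" and "s \<noteq> 0" "t \<noteq> 0"
  shows "\<bar>(a X - a (X - s)) / s - (a X - a (X - t)) / t\<bar> \<le> 2 * L * \<bar>s - t\<bar> / \<bar>t\<bar>"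
proof -
  have a_le: "\<bar>a u - a v\<bar> \<le> L * \<bar>u - v\<bar>" for u v
    using lipschitz_onD[OF lip] by (simp add: dist_real_def)
  have "(a X - a (X - s)) / s - (a X - a (X - t)) / t
      = ((t - s) * (a X - a (X - s)) + s * (a (X - t) - a (X - s))) / (s * t)"
    using assms by (simp add: field_simps)
  also have "\<bar>\<dots>\<bar> \<le> (\<bar>t - s\<bar> * (L * \<bar>s\<bar>) + \<bar>s\<bar> * (L * \<bar>s - t\<bar>)) / \<bar>s * t\<bar>"
    unfolding abs_divide
  proof (rule divide_right_mono)
    show "\<bar>(t - s) * (a X - a (X - s)) + s * (a (X - t) - a (X - s))\<bar>
        \<le> \<bar>t - s\<bar> * (L * \<bar>s\<bar>) + \<bar>s\<bar> * (L * \<bar>s - t\<bar>)"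
      using a_le[of X "X - s"] a_le[of "X - t" "X - s"]
      by (auto simp: abs_mult intro!: abs_triangle_ineq[THEN order_trans] add_mono mult_left_mono)
  qed simp
  also have "\<dots> = 2 * L * \<bar>s - t\<bar> / \<bar>t\<bar>"
    using assms by (simp add: abs_mult abs_minus_commute field_simps)
  finally show ?thesis .
qed

lemma norm_kern_diff_le:
  assumes lip: "L-lipschitz_on UNIV a" and "s \<noteq> 0" "t \<noteq> 0"
  shows "cmod (kern a X s - kern a X t) \<le> \<bar>s - t\<bar> / (\<bar>s\<bar> * \<bar>t\<bar>) + 2 * L * \<bar>s - t\<bar> / t\<^sup>2"
proof -
  define q where "q r = (a X - a (X - r)) / r" for r
  have kern_q: "kern a X r = of_real (1 / r) * iexp (q r)" for r
    unfolding kern_def q_def by simp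
  have "kern a X s - kern a X t
      = of_real (1 / s - 1 / t) * iexp (q s) + of_real (1 / t) * (iexp (q s) - iexp (q t))"
    unfolding kern_q by (simp add: algebra_simps)
  then have "cmod (kern a X s - kern a X t)
      \<le> \<bar>1 / s - 1 / t\<bar> + \<bar>1 / t\<bar> * cmod (iexp (q s) - iexp (q t))"
    by (metis norm_triangle_ineq norm_mult norm_of_real norm_exp_i_times mult.right_neutral)
  also have "\<dots> \<le> \<bar>1 / s - 1 / t\<bar> + \<bar>1 / t\<bar> * (2 * L * \<bar>s - t\<bar> / \<bar>t\<bar>)"
    using norm_iexp_diff_le[of "q s" "q t"] abs_difference_quotient_diff_le[OF assms, of X]
    unfolding q_def by (intro add_left_mono mult_left_mono) auto
  also have "\<dots> = \<bar>s - t\<bar> / (\<bar>s\<bar> * \<bar>t\<bar>) + 2 * L * \<bar>s - t\<bar> / t\<^sup>2"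
    using assms by (simp add: field_simps abs_mult abs_minus_commute power2_eq_square)
  finally show ?thesis .
qed

lemma norm_kern_diff_tail_le:
  assumes lip: "L-lipschitz_on UNIV a" and "2 * \<bar>y\<bar> < \<bar>x\<bar>"
  shows "cmod (kern a X (x - y) - kern a X x) \<le> 2 * (1 + L) * \<bar>y\<bar> / x\<^sup>2"
proof -
  have "\<bar>x\<bar> \<le> 2 * \<bar>x - y\<bar>" "x \<noteq> 0" "x - y \<noteq> 0"
    using assms(2) abs_triangle_ineq2[of x y] by auto
  then have "x\<^sup>2 \<le> 2 * (\<bar>x - y\<bar> * \<bar>x\<bar>)"
    using mult_right_mono[of "\<bar>x\<bar>" "2 * \<bar>x - y\<bar>" "\<bar>x\<bar>"] by (simp add: power2_eq_square)
  then have "2 * \<bar>y\<bar> / (2 * (\<bar>x - y\<bar> * \<bar>x\<bar>)) \<le> 2 * \<bar>y\<bar> / x\<^sup>2"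
    using \<open>x \<noteq> 0\<close> by (intro frac_le) auto
  moreover have "cmod (kern a X (x - y) - kern a X x)
      \<le> \<bar>y\<bar> / (\<bar>x - y\<bar> * \<bar>x\<bar>) + 2 * L * \<bar>y\<bar> / x\<^sup>2"
    using norm_kern_diff_le[OF lip \<open>x - y \<noteq> 0\<close> \<open>x \<noteq> 0\<close>] by simp
  ultimately show ?thesis
    by (simp add: algebra_simps add_divide_distrib)
qed

lemma nn_integral_inverse_square_atLeast:
  assumes "c > 0"
  shows "(\<integral>\<^sup>+ x \<in> {c..}. ennreal (1 / x\<^sup>2) \<partial>lborel) = ennreal (1 / c)"
proof -
  have "(\<integral>\<^sup>+ x. ennreal (1 / x\<^sup>2) * indicator {c..} x \<partial>lborel) = 0 - (- 1 / c)"
  proof (rule nn_integral_FTC_atLeast)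
    show "((\<lambda>x::real. - 1 / x) \<longlongrightarrow> 0) at_top"
      by (intro tendsto_divide_0[OF tendsto_const] filterlim_at_top_imp_at_infinity filterlim_ident)
    show "((\<lambda>x. - 1 / x) has_real_derivative 1 / x\<^sup>2) (at x)" if "c \<le> x" for x
      using that assms by (auto intro!: derivative_eq_intros simp: power2_eq_square)
  qed auto
  then show ?thesis by simp
qed

lemma nn_integral_inverse_square_tail:
  assumes "c > 0"
  shows "(\<integral>\<^sup>+ x \<in> {x. c \<le> \<bar>x\<bar>}. ennreal (1 / x\<^sup>2) \<partial>lborel) = ennreal (2 / c)"
proof -
  have split: "indicator {x. c \<le> \<bar>x\<bar>} x = (indicator {c..} x + indicator {c..} (- x) :: ennreal)"
    for x :: real
    using assms by (auto split: split_indicator)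
  have "(\<integral>\<^sup>+ x \<in> {x. c \<le> \<bar>x\<bar>}. ennreal (1 / x\<^sup>2) \<partial>lborel)
      = (\<integral>\<^sup>+ x. ennreal (1 / x\<^sup>2) * indicator {c..} x \<partial>lborel)
        + (\<integral>\<^sup>+ x. ennreal (1 / (- x)\<^sup>2) * indicator {c..} (- x) \<partial>lborel)"
    by (simp add: split distrib_left nn_integral_add)
  also have "(\<integral>\<^sup>+ x. ennreal (1 / (- x)\<^sup>2) * indicator {c..} (- x) \<partial>lborel)
      = (\<integral>\<^sup>+ x. ennreal (1 / x\<^sup>2) * indicator {c..} x \<partial>lborel)"
    using nn_integral_real_affine[of "\<lambda>x. ennreal (1 / x\<^sup>2) * indicator {c..} x" "-1" 0]
    by simp
  finally show ?thesis
    using assms by (simp add: nn_integral_inverse_square_atLeast flip: ennreal_plus)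
qed

theorem lemma2p1:
  fixes a :: "real \<Rightarrow> real" and x0 y :: real
  assumes "\<exists>L. L-lipschitz_on UNIV a"
    and "y \<noteq> 0"
  shows "(\<integral>\<^sup>+ x \<in> {x. \<bar>x\<bar> > 2 * \<bar>y\<bar>}.
            ennreal (cmod (kern a (x + x0) (x - y) - kern a (x + x0) x)) \<partial>lborel)
         \<le> ennreal (8 * (1 + lip_const a))"
proof -
  define L where "L = lip_const a"
  have lip: "L-lipschitz_on UNIV a"
    unfolding L_def using assms(1) by (rule lipschitz_on_lip_const)
  define K where "K = 2 * (1 + L) * \<bar>y\<bar>"
  have "K \<ge> 0"
    using lipschitz_on_nonneg[OF lip] unfolding K_def by simp
  have "(\<integral>\<^sup>+ x \<in> {x. \<bar>x\<bar> > 2 * \<bar>y\<bar>}.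
            ennreal (cmod (kern a (x + x0) (x - y) - kern a (x + x0) x)) \<partial>lborel)
      \<le> (\<integral>\<^sup>+ x \<in> {x. 2 * \<bar>y\<bar> \<le> \<bar>x\<bar>}. ennreal K * ennreal (1 / x\<^sup>2) \<partial>lborel)"
  proof (intro nn_integral_mono)
    fix x :: real
    have "2 * \<bar>y\<bar> < \<bar>x\<bar> \<Longrightarrow>
        cmod (kern a (x + x0) (x - y) - kern a (x + x0) x) \<le> K * (1 / x\<^sup>2)"
      using norm_kern_diff_tail_le[OF lip] unfolding K_def by simp
    then show "ennreal (cmod (kern a (x + x0) (x - y) - kern a (x + x0) x))
          * indicator {x. \<bar>x\<bar> > 2 * \<bar>y\<bar>} x
        \<le> ennreal K * ennreal (1 / x\<^sup>2) * indicator {x. 2 * \<bar>y\<bar> \<le> \<bar>x\<bar>} x"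
      using \<open>K \<ge> 0\<close> by (auto split: split_indicator simp flip: ennreal_mult intro: ennreal_leI)
  qed
  also have "\<dots> = ennreal K * ennreal (2 / (2 * \<bar>y\<bar>))"
    using assms(2)
    by (simp add: nn_integral_cmult mult.assoc nn_integral_inverse_square_tail[of "2 * \<bar>y\<bar>"])
  also have "\<dots> = ennreal (K * (2 / (2 * \<bar>y\<bar>)))"
    using \<open>K \<ge> 0\<close> by (intro ennreal_mult[symmetric]) auto
  also have "\<dots> = ennreal (2 * (1 + L))"
    using assms(2) unfolding K_def by simp
  also have "\<dots> \<le> ennreal (8 * (1 + lip_const a))"
    using lipschitz_on_nonneg[OF lip] unfolding L_def by (intro ennreal_leI) simp
  finally show ?thesis .
qed

end
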